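(* (1) If $\tau$ is an involution in $\mathrm{PL}^+(\mathbb{S}^1)$ with $\tau\neq\mathrm{id}$, then $\tau$ is conjugate in $\mathrm{PL}^+(\mathbb{S}^1)$ to the rotation $r_\pi:z\mapsto -z$. (2) If $\tau$ is an involution in $\mathrm{PL}^-(\mathbb{S}^1)$, then $\tau$ is conjugate in $\mathrm{PL}(\mathbb{S}^1)$ to the reflection $s:z\mapsto\bar z$.
   Context: $\mathbb{S}^1=\{z\in\mathbb{C}:|z|=1\}$. A homeomorphism $f$ of $\mathbb{S}^1$ is piecewise linear (PL) if its lift $\tilde f:\mathbb{R}\to\mathbb{R}$ (defined by $f(e^{2\pi i x})=e^{2\pi i\tilde f(x)}$) is differentiable except at finitely or countably many break points, at which it has one-sided derivatives, and its derivative is constant on each connected component of the complement of the break points. $\mathrm{PL}(\mathbb{S}^1)$ is the group of PL homeomorphisms of $\mathbb{S}^1$, $\mathrm{PL}^+(\mathbb{S}^1)$ the orientation-preserving ones, $\mathrm{PL}^-(\mathbb{S}^1)$ the orientation-reversing ones. An involution is $\tau$ with $\tau^2=\mathrm{id}$. *)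

theory Defs
  imports "HOL-Analysis.Analysis"
begin

definition S1 :: "complex set" where
  "S1 = {z. cmod z = 1}"

definition is_lift :: "(complex \<Rightarrow> complex) \<Rightarrow> (real \<Rightarrow> real) \<Rightarrow> bool" where
  "is_lift f F \<longleftrightarrow> continuous_on UNIV F \<and>
     (\<forall>x. f (cis (2 * pi * x)) = cis (2 * pi * F x))"

definition pl_lift :: "(real \<Rightarrow> real) \<Rightarrow> bool" where
  "pl_lift F \<longleftrightarrow> (\<exists>B. countable B \<and>
     (\<forall>x. x \<notin> B \<longrightarrow> F differentiable (at x)) \<and>
     (\<forall>b\<in>B. (\<exists>l. (F has_real_derivative l) (at b within {..b})) \<and>
              (\<exists>r. (F has_real_derivative r) (at b within {b..}))) \<and>
     (\<forall>x. x \<notin> B \<longrightarrow> (\<exists>c. \<forall>y \<in> connected_component_set (- B) x.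
              (F has_real_derivative c) (at y))))"

definition PL :: "(complex \<Rightarrow> complex) set" where
  "PL = {f. (\<exists>g. homeomorphism S1 S1 f g) \<and> (\<exists>F. is_lift f F \<and> pl_lift F)}"

definition PL_plus :: "(complex \<Rightarrow> complex) set" where
  "PL_plus = {f. f \<in> PL \<and> (\<exists>F. is_lift f F \<and> strict_mono F)}"

definition PL_minus :: "(complex \<Rightarrow> complex) set" where
  "PL_minus = {f. f \<in> PL \<and> (\<exists>F. is_lift f F \<and> (\<forall>x y. x < y \<longrightarrow> F y < F x))}"

definition involution_S1 :: "(complex \<Rightarrow> complex) \<Rightarrow> bool" where
  "involution_S1 \<tau> \<longleftrightarrow> (\<forall>z\<in>S1. \<tau> (\<tau> z) = z)"

text \<open>h conjugates f to g on S1: h o f o h^{-1} = g, i.e. h o f = g o h on S1.\<close>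
definition conj_by :: "(complex \<Rightarrow> complex) \<Rightarrow> (complex \<Rightarrow> complex) \<Rightarrow> (complex \<Rightarrow> complex) \<Rightarrow> bool" where
  "conj_by h f g \<longleftrightarrow> (\<forall>z\<in>S1. h (f z) = g (h z))"

end

theory Submission
  imports Defs
begin

text \<open>Lift \<open>\<tau>\<close> to \<open>F : \<real> \<rightarrow> \<real>\<close>. Injectivity of \<open>\<tau>\<close> forces \<open>F (x + 1) = F x \<plusminus> 1\<close> according
  to orientation, and \<open>\<tau>\<^sup>2 = id\<close> forces \<open>F \<circ> F = id + m\<close> for an integer \<open>m\<close>.

  If \<open>\<tau>\<close> preserves orientation and is not the identity, \<open>F x - x\<close> never meets \<open>\<int>\<close>
  (otherwise an integer translate of \<open>F\<close> would be an increasing involution of \<open>\<real>\<close>, hence the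
  identity), so it stays in an interval \<open>(a, a + 1)\<close> and \<open>m = 2a + 1\<close>. Then
  \<open>H = (id + F)/2 - a/2 - 1/4\<close> satisfies \<open>H \<circ> F = H + a + 1/2\<close> and descends to a conjugacy with
  the half turn. If \<open>\<tau>\<close> reverses orientation, \<open>F - id\<close> has increment \<open>-2\<close>, so \<open>F\<close> has a
  fixed point, \<open>m = 0\<close>, and \<open>H = (id - F)/2\<close> satisfies \<open>H \<circ> F = -H\<close>, a conjugacy with complex
  conjugation. In both cases \<open>H\<close> is an affine combination of \<open>id\<close> and \<open>F\<close>, hence again a PL lift.\<close>

lemma cis_2pi_eq_iff: "cis (2*pi*a) = cis (2*pi*b) \<longleftrightarrow> a - b \<in> \<int>"
proof -
  have cancel: "2*pi*a = 2*pi*b + 2*pi*n \<longleftrightarrow> a - b = n" for n :: real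
  proof -
    have "2*pi*b + 2*pi*n = 2*pi*(b + n)" by (simp only: distrib_left)
    then show ?thesis by auto
  qed
  have "cis (2*pi*a) = cis (2*pi*b) \<longleftrightarrow> (\<exists>n::int. 2*pi*a = 2*pi*b + 2*pi*n)"
    using sin_cos_eq_iff[of "2*pi*a" "2*pi*b"] by (auto simp: complex_eq_iff)
  also have "\<dots> \<longleftrightarrow> (\<exists>n::int. a - b = n)"
    by (simp only: cancel)
  also have "\<dots> \<longleftrightarrow> a - b \<in> \<int>"
    by (auto elim: Ints_cases)
  finally show ?thesis .
qed

lemma diff_in_Ints_iff_add_of_int:
  fixes a b :: "'a::ring_1"
  shows "a - b \<in> \<int> \<longleftrightarrow> (\<exists>n::int. a = b + of_int n)"
  by (metis Ints_cases Ints_of_int add_diff_cancel_left' diff_add_cancel)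

lemma cis_2pi_add_of_int [simp]: "cis (2*pi*(a + of_int n)) = cis (2*pi*a)"
  by (simp add: cis_2pi_eq_iff)

lemma cis_2pi_add_half: "cis (2*pi*(a + 1/2)) = - cis (2*pi*a)"
proof -
  have "2*pi*(a + 1/2) = 2*pi*a + pi" by (simp add: algebra_simps)
  then show ?thesis by (simp add: complex_eq_iff)
qed

lemma cis_in_S1 [simp]: "cis t \<in> S1"
  by (simp add: S1_def)

lemma S1_eq_sphere: "S1 = sphere 0 1"
  by (auto simp: S1_def)

lemma cis_Arg_S1:
  assumes "z \<in> S1" shows "cis (2*pi*(Arg z/(2*pi))) = z"
proof -
  have "z \<noteq> 0" "cmod z = 1" using assms by (auto simp: S1_def)
  then show ?thesis using cis_Arg[of z] by (simp add: sgn_div_norm)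
qed

lemma S1_obtain_cis:
  assumes "z \<in> S1" obtains t where "z = cis (2*pi*t)"
  using cis_Arg_S1[OF assms] by metis

lemma cis_2pi_image_unit_interval: "(\<lambda>x. cis (2*pi*x)) ` {0..1} = S1"
proof
  show "S1 \<subseteq> (\<lambda>x. cis (2*pi*x)) ` {0..1}"
  proof
    fix z assume z: "z \<in> S1"
    define t where "t = Arg z/(2*pi)"
    have t: "cis (2*pi*t) = z" unfolding t_def by (rule cis_Arg_S1[OF z])
    have "-1/2 < t" "t \<le> 1/2"
      using Arg_bounded[of z] pi_gt_zero unfolding t_def by (auto simp: field_simps)
    then have "t \<in> {0..1} \<or> t + of_int 1 \<in> {0..1}" by auto
    then show "z \<in> (\<lambda>x. cis (2*pi*x)) ` {0..1}"
      using t cis_2pi_add_of_int[of t 1] by (metis image_eqI)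
  qed
qed auto

lemma continuous_Ints_valued_const:
  fixes D :: "'a::topological_space \<Rightarrow> real"
  assumes "connected S" "continuous_on S D" "\<And>x. x \<in> S \<Longrightarrow> D x \<in> \<int>"
    and "x \<in> S" "y \<in> S"
  shows "D x = D y"
proof -
  have "D constant_on S"
  proof (rule continuous_discrete_range_constant[OF assms(1,2)])
    fix x assume "x \<in> S"
    show "\<exists>e>0. \<forall>y. y \<in> S \<and> D y \<noteq> D x \<longrightarrow> e \<le> norm (D y - D x)"
      using assms(3) \<open>x \<in> S\<close> by (intro exI[of _ 1]) (auto intro: Ints_nonzero_abs_ge1)
  qed
  then show ?thesis using assms(4,5) by (auto simp: constant_on_def)
qed

lemma continuous_nonint_between_floor:
  fixes E :: "real \<Rightarrow> real"
  assumes "continuous_on UNIV E" "\<And>x. E x \<notin> \<int>"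
  shows "of_int \<lfloor>E 0\<rfloor> < E x \<and> E x < of_int \<lfloor>E 0\<rfloor> + 1"
proof -
  let ?a = "of_int \<lfloor>E 0\<rfloor> :: real"
  have between: "w \<in> range E" if "u \<in> range E" "v \<in> range E" "u \<le> w" "w \<le> v" for u v w
    using connected_continuous_image[OF assms(1)] that unfolding connected_iff_interval by blast
  have "?a < E 0" using assms(2)[of 0] by (metis Ints_of_int of_int_floor_le order_le_less)
  moreover have "E 0 < ?a + 1" by simp
  moreover have "?a \<notin> range E" "?a + 1 \<notin> range E"
    using assms(2) by (metis Ints_of_int rangeE, metis Ints_1 Ints_add Ints_of_int rangeE)
  ultimately show ?thesis using between[of "E x" "E 0" ?a] between[of "E 0" "E x" "?a + 1"] by force
qed

lemma increment_of_int:
  fixes F :: "real \<Rightarrow> real"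
  assumes F: "\<And>x. F (x + 1) = F x + k"
  shows "F (x + of_int n) = F x + of_int n * k"
proof (induction n rule: int_induct[where k = 0])
  case base then show ?case by simp
next
  case (step1 i)
  have "F (x + of_int (i + 1)) = F (x + of_int i) + k"
    using F[of "x + of_int i"] by (simp add: add.assoc)
  then show ?case using step1 by (simp add: algebra_simps)
next
  case (step2 i)
  have "F (x + of_int i) = F (x + of_int (i - 1)) + k"
    using F[of "x + of_int (i - 1)"] by (simp add: add.assoc)
  then show ?case using step2 by (simp add: algebra_simps)
qed

lemma surj_continuous_increment:
  fixes F :: "real \<Rightarrow> real"
  assumes "continuous_on UNIV F" "\<And>x. F (x + 1) = F x + k" "k \<noteq> 0"
  shows "surj F"
proof -
  have "y \<in> range F" for y
  proof -
    define N where "N = \<lceil>\<bar>y - F 0\<bar> / \<bar>k\<bar>\<rceil>"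
    have "\<bar>y - F 0\<bar> / \<bar>k\<bar> \<le> of_int N" unfolding N_def by simp
    then have N: "\<bar>y - F 0\<bar> \<le> of_int N * \<bar>k\<bar>" using assms(3) by (simp add: field_simps)
    have "F (of_int N) = F 0 + of_int N * k" "F (of_int (- N)) = F 0 - of_int N * k"
      using increment_of_int[of F k 0, OF assms(2), of N] increment_of_int[of F k 0, OF assms(2), of "- N"]
      by auto
    then have "min (F (of_int N)) (F (of_int (- N))) \<le> y" "y \<le> max (F (of_int N)) (F (of_int (- N)))"
      using N by (auto simp: abs_if min_def max_def split: if_splits)
    moreover have "min (F (of_int N)) (F (of_int (- N))) \<in> range F"
      "max (F (of_int N)) (F (of_int (- N))) \<in> range F" by (auto simp: min_def max_def)
    ultimately show ?thesis
      using connected_continuous_image[OF assms(1)] unfolding connected_iff_interval by blast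
  qed
  then show ?thesis by blast
qed

lemma strict_mono_involution_imp_id:
  fixes G :: "'a::linorder \<Rightarrow> 'a"
  assumes "strict_mono G" "G (G y) = y"
  shows "G y = y"
proof (cases "G y" y rule: linorder_cases)
  case less
  then have "G (G y) < G y" by (rule strict_monoD[OF assms(1)])
  then show ?thesis using less assms(2) by simp
next
  case greater
  then have "G y < G (G y)" by (rule strict_monoD[OF assms(1)])
  then show ?thesis using greater assms(2) by simp
qed

lemma pl_lift_affine:
  assumes "pl_lift F"
  shows "pl_lift (\<lambda>x. a * x + b * F x + c)"
proof -
  let ?G = "\<lambda>x. a * x + b * F x + c"
  obtain B where B: "countable B" "\<forall>x. x \<notin> B \<longrightarrow> F differentiable (at x)"
     "\<forall>x\<in>B. (\<exists>l. (F has_real_derivative l) (at x within {..x})) \<and>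
              (\<exists>r. (F has_real_derivative r) (at x within {x..}))"
     "\<forall>x. x \<notin> B \<longrightarrow> (\<exists>d. \<forall>y \<in> connected_component_set (- B) x.
              (F has_real_derivative d) (at y))"
    using assms unfolding pl_lift_def by blast
  have D: "(?G has_real_derivative (a + b * d)) (at y within S)"
    if "(F has_real_derivative d) (at y within S)" for d y S
    using DERIV_add[OF DERIV_add[OF DERIV_cmult_Id DERIV_cmult[OF that]] DERIV_const] by simp
  show ?thesis unfolding pl_lift_def
  proof (intro exI[of _ B] conjI ballI allI impI)
    fix x assume "x \<notin> B"
    then show "?G differentiable (at x)"
      using B(2) D real_differentiable_def by blast
    show "\<exists>d. \<forall>y \<in> connected_component_set (- B) x. (?G has_real_derivative d) (at y)"
      using B(4) \<open>x \<notin> B\<close> D by blast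
  next
    fix x assume "x \<in> B"
    then show "\<exists>l. (?G has_real_derivative l) (at x within {..x})"
      "\<exists>r. (?G has_real_derivative r) (at x within {x..})"
      using B(3) D by blast+
  qed fact
qed

lemma lift_unique_mod_Ints:
  assumes "is_lift f F" "is_lift f G"
  shows "\<exists>n::int. \<forall>x. F x = G x + of_int n"
proof -
  have cont: "continuous_on UNIV (\<lambda>x. F x - G x)"
    using assms unfolding is_lift_def by (intro continuous_intros) auto
  have Ints: "F x - G x \<in> \<int>" for x
    using assms cis_2pi_eq_iff unfolding is_lift_def by metis
  obtain n :: int where "F 0 - G 0 = of_int n" using Ints[of 0] Ints_cases by blast
  then have "F x = G x + of_int n" for x
    using continuous_Ints_valued_const[OF connected_UNIV cont, of x 0] Ints by simp
  then show ?thesis by blast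
qed

lemma pl_lift_if_PL:
  assumes "t \<in> PL" "is_lift t F"
  shows "pl_lift F"
proof -
  obtain G where G: "is_lift t G" "pl_lift G" using assms(1) unfolding PL_def by blast
  obtain n :: int where "\<And>x. F x = G x + of_int n"
    using lift_unique_mod_Ints[OF assms(2) G(1)] by blast
  then have "F = (\<lambda>x. 0 * x + 1 * G x + of_int n)" by auto
  then show ?thesis using pl_lift_affine[OF G(2), of 0 1 "of_int n"] by simp
qed

lemma inj_on_S1_if_PL:
  assumes "t \<in> PL" shows "inj_on t S1"
proof -
  obtain g where "homeomorphism S1 S1 t g" using assms unfolding PL_def by blast
  then show ?thesis by (rule inj_on_inverseI[OF homeomorphism_apply1])
qed

lemma lift_increment_Ints:
  assumes "is_lift f F"
  shows "\<exists>k::int. \<forall>x. F (x + 1) = F x + of_int k"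
proof -
  have cont: "continuous_on UNIV F" and lift: "\<And>x. f (cis (2*pi*x)) = cis (2*pi*F x)"
    using assms unfolding is_lift_def by auto
  have "f (cis (2*pi*x)) = cis (2*pi*F (x + 1))" for x
    using lift[of "x + 1"] cis_2pi_add_of_int[of x 1] by simp
  moreover have "continuous_on UNIV (\<lambda>x. F (x + 1))"
    by (intro continuous_intros continuous_on_compose2[OF cont]) auto
  ultimately have "is_lift f (\<lambda>x. F (x + 1))" unfolding is_lift_def by blast
  then show ?thesis using lift_unique_mod_Ints[OF _ assms] by blast
qed

lemma lift_of_inj_on_Ints_diff:
  assumes "is_lift f F" "inj_on f S1" "F y - F x \<in> \<int>"
  shows "y - x \<in> \<int>"
proof -
  have "f (cis (2*pi*y)) = f (cis (2*pi*x))"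
    using assms(1,3) cis_2pi_eq_iff unfolding is_lift_def by metis
  then show ?thesis using assms(2) cis_2pi_eq_iff by (metis cis_in_S1 inj_onD)
qed

lemma lift_of_inj_on_increment_pm1:
  assumes "is_lift f F" "inj_on f S1" "inj F"
  obtains "\<And>x. F (x + 1) = F x + 1" | "\<And>x. F (x + 1) = F x - 1"
proof -
  obtain k :: int where k: "\<And>x. F (x + 1) = F x + of_int k"
    using lift_increment_Ints[OF assms(1)] by blast
  have "k \<noteq> 0" using k[of 0] injD[OF assms(3), of 1 0] by auto
  define v where "v = F 0 + of_int (sgn k)"
  have "min (F 0) (F 1) \<le> v" "v \<le> max (F 0) (F 1)"
    using k[of 0] \<open>k \<noteq> 0\<close> by (auto simp: v_def sgn_if)
  moreover have "connected (F ` {0..1})"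
    using assms(1) unfolding is_lift_def
    by (intro connected_continuous_image) (auto intro: continuous_on_subset)
  moreover have "min (F 0) (F 1) \<in> F ` {0..1}" "max (F 0) (F 1) \<in> F ` {0..1}"
    by (auto simp: min_def max_def)
  ultimately obtain y where y: "y \<in> {0..1}" "F y = v"
    unfolding connected_iff_interval by blast
  then have "F y - F 0 \<in> \<int>" by (simp add: v_def)
  then have "y - 0 \<in> \<int>" by (rule lift_of_inj_on_Ints_diff[OF assms(1,2)])
  then obtain j :: int where "y = of_int j" by (auto elim: Ints_cases)
  then have "y = 0 \<or> y = 1" using y(1) by auto
  moreover have "y \<noteq> 0" using y(2) \<open>k \<noteq> 0\<close> by (auto simp: v_def sgn_eq_0_iff)
  ultimately have "k = sgn k" using y(2) k[of 0] by (auto simp: v_def)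
  then have "k = 1 \<or> k = -1" using \<open>k \<noteq> 0\<close> by (auto simp: sgn_if split: if_splits)
  then show ?thesis using k that by auto
qed

lemma lift_of_involution:
  assumes "is_lift t F" "involution_S1 t"
  shows "\<exists>m::int. \<forall>x. F (F x) = x + of_int m"
proof -
  have cont: "continuous_on UNIV F" and lift: "\<And>x. t (cis (2*pi*x)) = cis (2*pi*F x)"
    using assms(1) unfolding is_lift_def by auto
  have "cis (2*pi*F (F x)) = cis (2*pi*x)" for x
    using lift assms(2) unfolding involution_S1_def by (metis cis_in_S1)
  then have "is_lift id (\<lambda>x. F (F x))"
    unfolding is_lift_def using continuous_on_compose2[OF cont cont] by simp
  moreover have "is_lift id (\<lambda>x. x)" by (simp add: is_lift_def)
  ultimately show ?thesis using lift_unique_mod_Ints by fastforce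
qed

definition circle_map :: "(real \<Rightarrow> real) \<Rightarrow> complex \<Rightarrow> complex" where
  "circle_map H z = cis (2*pi*H (Arg z/(2*pi)))"

lemma is_lift_circle_map:
  assumes "continuous_on UNIV H" "\<And>x. H (x + 1) = H x + 1"
  shows "is_lift (circle_map H) H"
  unfolding is_lift_def
proof (intro conjI allI)
  fix x :: real
  have "Arg (cis (2*pi*x))/(2*pi) - x \<in> \<int>"
    using cis_Arg_S1[OF cis_in_S1] cis_2pi_eq_iff by blast
  then obtain n :: int where "Arg (cis (2*pi*x))/(2*pi) = x + of_int n"
    by (auto simp: diff_in_Ints_iff_add_of_int)
  then show "circle_map H (cis (2*pi*x)) = cis (2*pi*H x)"
    unfolding circle_map_def using increment_of_int[of H 1, OF assms(2)] by simp
qed fact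

lemma continuous_on_circle_map:
  assumes "continuous_on UNIV H" "\<And>x. H (x + 1) = H x + 1"
  shows "continuous_on S1 (circle_map H)"
proof -
  let ?p = "\<lambda>x::real. cis (2*pi*x)"
  have p: "continuous_on A ?p" for A by (intro continuous_intros)
  have quotient: "quotient_map (top_of_set {0..1}) (top_of_set S1) ?p"
  proof (rule continuous_imp_quotient_map)
    show "continuous_map (top_of_set {0..1}) (top_of_set S1) ?p" using p by auto
    show "?p ` topspace (top_of_set {0..1}) = topspace (top_of_set S1)"
      using cis_2pi_image_unit_interval by simp
  qed (simp_all add: compact_space_subtopology Hausdorff_space_subtopology)
  have "circle_map H \<circ> ?p = ?p \<circ> H"
    using is_lift_circle_map[of H, OF assms] by (auto simp: is_lift_def)
  moreover have "continuous_map (top_of_set {0..1}) (top_of_set S1) (?p \<circ> H)"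
    using continuous_on_compose[OF continuous_on_subset[OF assms(1)] p] by auto
  ultimately have "continuous_map (top_of_set S1) (top_of_set S1) (circle_map H)"
    by (metis continuous_compose_quotient_map[OF quotient])
  then show ?thesis by simp
qed

lemma circle_map_in_PL_plus:
  assumes cont: "continuous_on UNIV H" and mono: "strict_mono H"
    and incr: "\<And>x. H (x + 1) = H x + 1" and pl: "pl_lift H"
  shows "circle_map H \<in> PL_plus"
proof -
  have lift: "is_lift (circle_map H) H" by (rule is_lift_circle_map[of H, OF cont incr])
  then have H: "circle_map H (cis (2*pi*x)) = cis (2*pi*H x)" for x
    unfolding is_lift_def by blast
  have "circle_map H ` S1 = S1"
  proof
    show "circle_map H ` S1 \<subseteq> S1" unfolding circle_map_def by auto
    show "S1 \<subseteq> circle_map H ` S1"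
    proof
      fix w assume "w \<in> S1"
      then obtain y where "w = cis (2*pi*y)" by (rule S1_obtain_cis)
      moreover obtain x where "H x = y"
        using surj_continuous_increment[of H, OF cont incr] by (metis one_neq_zero surjD)
      ultimately show "w \<in> circle_map H ` S1" using H by (metis cis_in_S1 image_eqI)
    qed
  qed
  moreover have "inj_on (circle_map H) S1"
  proof
    fix z1 z2 assume "z1 \<in> S1" "z2 \<in> S1" and eq: "circle_map H z1 = circle_map H z2"
    then obtain x1 x2 where z: "z1 = cis (2*pi*x1)" "z2 = cis (2*pi*x2)" by (metis S1_obtain_cis)
    then have "H x1 - H x2 \<in> \<int>" using eq H cis_2pi_eq_iff by metis
    then obtain n :: int where "H x1 = H x2 + of_int n"
      by (auto simp: diff_in_Ints_iff_add_of_int)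
    also have "\<dots> = H (x2 + of_int n)" using increment_of_int[of H 1, OF incr] by simp
    finally have "x1 = x2 + of_int n" using strict_mono_eq[OF mono] by blast
    then show "z1 = z2" using z by simp
  qed
  moreover have "compact S1" by (simp add: S1_eq_sphere)
  ultimately obtain g where "homeomorphism S1 S1 (circle_map H) g"
    using homeomorphism_compact[OF _ continuous_on_circle_map[of H, OF cont incr]] by blast
  then show ?thesis unfolding PL_plus_def PL_def using lift pl mono by blast
qed

lemma conj_by_lifts:
  assumes "is_lift t F" "is_lift h H" "\<And>x. g (cis (2*pi*H x)) = cis (2*pi*H (F x))"
  shows "conj_by h t g"
  unfolding conj_by_def
proof
  fix z assume "z \<in> S1"
  then obtain x where "z = cis (2*pi*x)" by (rule S1_obtain_cis)
  then show "h (t z) = g (h z)" using assms unfolding is_lift_def by simp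
qed

lemma PL_plus_obtain_lift:
  assumes "t \<in> PL_plus"
  obtains F where "is_lift t F" "strict_mono F" "pl_lift F" "continuous_on UNIV F"
    "\<And>x. F (x + 1) = F x + 1"
proof -
  obtain F where lift: "is_lift t F" and mono: "strict_mono F"
    using assms unfolding PL_plus_def by blast
  have PL: "t \<in> PL" using assms unfolding PL_plus_def by blast
  have "inj F" using mono strict_mono_imp_inj_on by blast
  then have "F (x + 1) = F x + 1" for x
  proof (rule lift_of_inj_on_increment_pm1[OF lift inj_on_S1_if_PL[OF PL]])
    assume "\<And>x. F (x + 1) = F x - 1"
    from this[of 0] strict_monoD[OF mono, of 0 1] show ?thesis by simp
  qed
  then show ?thesis using that lift mono pl_lift_if_PL[OF PL lift] lift
    unfolding is_lift_def by blast
qed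

lemma PL_minus_obtain_lift:
  assumes "t \<in> PL_minus"
  obtains F where "is_lift t F" "\<And>x y. x < y \<Longrightarrow> F y < F x" "pl_lift F"
    "continuous_on UNIV F" "\<And>x. F (x + 1) = F x - 1"
proof -
  obtain F where lift: "is_lift t F" and anti: "\<And>x y. x < y \<Longrightarrow> F y < F x"
    using assms unfolding PL_minus_def by blast
  have PL: "t \<in> PL" using assms unfolding PL_minus_def by blast
  have "inj F" by (rule injI) (metis anti less_irrefl neqE)
  then have "F (x + 1) = F x - 1" for x
  proof (rule lift_of_inj_on_increment_pm1[OF lift inj_on_S1_if_PL[OF PL]])
    assume "\<And>x. F (x + 1) = F x + 1"
    from this[of 0] anti[of 0 1] show ?thesis by simp
  qed
  then show ?thesis using that lift anti pl_lift_if_PL[OF PL lift] lift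
    unfolding is_lift_def by blast
qed

lemma lift_fixed_mod_Ints_imp_id:
  assumes lift: "is_lift t F" and mono: "strict_mono F" and incr: "\<And>x. F (x + 1) = F x + 1"
    and inv: "\<And>x. F (F x) = x + of_int m" and fixed: "F x - x \<in> \<int>"
  shows "\<forall>z\<in>S1. t z = z"
proof -
  obtain j :: int where j: "F x = x + of_int j"
    using fixed by (auto simp: diff_in_Ints_iff_add_of_int)
  define G where "G y = F y - of_int j" for y
  have GG: "G (G y) = y + of_int (m - 2 * j)" for y
    unfolding G_def using increment_of_int[of F 1, OF incr, of "F y" "- j"] inv[of y] by simp
  then have "m = 2 * j" using GG[of x] j unfolding G_def by simp
  then have "G (G y) = y" for y using GG by simp
  moreover have "strict_mono G" using mono unfolding G_def strict_mono_def by simp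
  ultimately have G: "G y = y" for y using strict_mono_involution_imp_id by blast
  show ?thesis
  proof
    fix z assume "z \<in> S1"
    then obtain y where "z = cis (2*pi*y)" by (rule S1_obtain_cis)
    then show "t z = z"
      using lift G[of y] cis_2pi_add_of_int[of y j] unfolding is_lift_def G_def
      by (metis diff_add_cancel)
  qed
qed

lemma lift_of_nontrivial_involution:
  assumes lift: "is_lift t F" and mono: "strict_mono F" and incr: "\<And>x. F (x + 1) = F x + 1"
    and inv: "\<And>x. F (F x) = x + of_int m" and nontrivial: "\<exists>z\<in>S1. t z \<noteq> z"
  shows "F (F x) = x + 2 * of_int \<lfloor>F 0\<rfloor> + 1"
proof -
  have "continuous_on UNIV (\<lambda>x. F x - x)"
    using lift unfolding is_lift_def by (intro continuous_intros) auto
  moreover have "F x - x \<notin> \<int>" for x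
    using lift_fixed_mod_Ints_imp_id[OF lift mono incr inv] nontrivial by blast
  ultimately have bounds: "of_int \<lfloor>F 0\<rfloor> < F y - y \<and> F y - y < of_int \<lfloor>F 0\<rfloor> + 1" for y
    using continuous_nonint_between_floor[of "\<lambda>x. F x - x"] by simp
  have "m = 2 * \<lfloor>F 0\<rfloor> + 1"
    using bounds[of 0] bounds[of "F 0"] inv[of 0] by linarith
  then show ?thesis using inv[of x] by simp
qed

lemma PL_plus_involution_conj_half_turn:
  assumes "t \<in> PL_plus" "involution_S1 t" "\<exists>z\<in>S1. t z \<noteq> z"
  shows "\<exists>h\<in>PL_plus. conj_by h t (\<lambda>z. - z)"
proof -
  obtain F where lift: "is_lift t F" and mono: "strict_mono F" and pl: "pl_lift F"
    and cont: "continuous_on UNIV F" and incr: "\<And>x. F (x + 1) = F x + 1"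
    using PL_plus_obtain_lift[OF assms(1)] by blast
  obtain m :: int where "\<And>x. F (F x) = x + of_int m"
    using lift_of_involution[OF lift assms(2)] by blast
  note inv = lift_of_nontrivial_involution[OF lift mono incr this assms(3)]
  define a where "a = \<lfloor>F 0\<rfloor>"
  define H where "H x = (1/2) * x + (1/2) * F x + (- of_int a / 2 - 1/4)" for x
  have contH: "continuous_on UNIV H" unfolding H_def by (intro continuous_intros cont)
  have monoH: "strict_mono H"
    unfolding H_def by (rule strict_monoI, frule strict_monoD[OF mono], linarith)
  have incrH: "H (x + 1) = H x + 1" for x
    unfolding H_def using incr[of x] by (simp add: field_simps)
  have plH: "pl_lift H" unfolding H_def by (rule pl_lift_affine[OF pl])
  have "H (F x) = (H x + 1/2) + of_int a" for x
    unfolding H_def a_def using inv[of x] by (simp add: field_simps)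
  then have "- cis (2*pi*H x) = cis (2*pi*H (F x))" for x by (simp add: cis_2pi_add_half)
  then have "conj_by (circle_map H) t (\<lambda>z. - z)"
    by (rule conj_by_lifts[OF lift is_lift_circle_map[of H, OF contH incrH]])
  moreover have "circle_map H \<in> PL_plus"
    by (rule circle_map_in_PL_plus[of H, OF contH monoH incrH plH])
  ultimately show ?thesis by blast
qed

lemma PL_minus_involution_conj_cnj:
  assumes "t \<in> PL_minus" "involution_S1 t"
  shows "\<exists>h\<in>PL. conj_by h t cnj"
proof -
  obtain F where lift: "is_lift t F" and anti: "\<And>x y. x < y \<Longrightarrow> F y < F x"
    and pl: "pl_lift F" and cont: "continuous_on UNIV F" and incr: "\<And>x. F (x + 1) = F x - 1"
    using PL_minus_obtain_lift[OF assms(1)] by blast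
  obtain m :: int where m: "\<And>x. F (F x) = x + of_int m"
    using lift_of_involution[OF lift assms(2)] by blast
  have "surj (\<lambda>x. F x - x)"
    using cont incr by (intro surj_continuous_increment[where k = "-2"] continuous_intros) auto
  then obtain p where "0 = F p - p" using surjD[of "\<lambda>x. F x - x" 0] by blast
  then have inv: "F (F x) = x" for x using m[of p] m[of x] by simp
  define H where "H x = (1/2) * x + (- 1/2) * F x + 0" for x
  have contH: "continuous_on UNIV H" unfolding H_def by (intro continuous_intros cont)
  have monoH: "strict_mono H"
    unfolding H_def by (rule strict_monoI, frule anti, linarith)
  have incrH: "H (x + 1) = H x + 1" for x
    unfolding H_def using incr[of x] by (simp add: field_simps)
  have plH: "pl_lift H" unfolding H_def by (rule pl_lift_affine[OF pl])
  have "H (F x) = - H x" for x unfolding H_def using inv[of x] by simp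
  then have "cnj (cis (2*pi*H x)) = cis (2*pi*H (F x))" for x by (simp add: cis_cnj)
  then have "conj_by (circle_map H) t cnj"
    by (rule conj_by_lifts[OF lift is_lift_circle_map[of H, OF contH incrH]])
  moreover have "circle_map H \<in> PL"
    using circle_map_in_PL_plus[of H, OF contH monoH incrH plH] unfolding PL_plus_def by blast
  ultimately show ?thesis by blast
qed

theorem proposition2p4:
  shows "(\<forall>\<tau>\<in>PL_plus. involution_S1 \<tau> \<and> (\<exists>z\<in>S1. \<tau> z \<noteq> z) \<longrightarrow>
            (\<exists>h\<in>PL_plus. conj_by h \<tau> (\<lambda>z. - z)))
       \<and> (\<forall>\<tau>\<in>PL_minus. involution_S1 \<tau> \<longrightarrow>
            (\<exists>h\<in>PL. conj_by h \<tau> cnj))"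
proof (intro conjI ballI impI)
  fix \<tau> assume "\<tau> \<in> PL_plus" "involution_S1 \<tau> \<and> (\<exists>z\<in>S1. \<tau> z \<noteq> z)"
  then show "\<exists>h\<in>PL_plus. conj_by h \<tau> (\<lambda>z. - z)"
    using PL_plus_involution_conj_half_turn by blast
next
  fix \<tau> assume "\<tau> \<in> PL_minus" "involution_S1 \<tau>"
  then show "\<exists>h\<in>PL. conj_by h \<tau> cnj" by (rule PL_minus_involution_conj_cnj)
qed

end
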